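(* Let $\Xi=\{(x_1,x_2)\in\mathbb{R}^2: x_1,x_2\ge 0,\ x_1+x_2\le 1\}$, write $x_0=1-x_1-x_2$, and for $\beta>0$ let $$F_\beta(x_1,x_2)\;=\;-\frac12\Big|\sum_{k=0}^2 x_k\mathbf{v}_k\Big|^2+\frac1\beta\sum_{k=0}^2 x_k\log(3x_k),$$ where $\mathbf{v}_k=(\cos(2\pi k/3),\sin(2\pi k/3))$. Let $\mathbf{p}=(1/3,1/3)$. Then $\mathbf{p}$ is a critical point of $F_\beta$ for every $\beta>0$; it is a local minimum of $F_\beta$ for $\beta<\beta_1:=2$, and a local maximum of $F_\beta$ for $\beta>2$.
   Context: Convention: $0\log 0=0$. Equivalently $F_\beta(\mathbf{x})=\frac14-\frac34\sum_{k=0}^2x_k^2+\frac1\beta\sum_{k=0}^2x_k\log(3x_k)$. *)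

theory Defs
  imports "HOL-Analysis.Analysis"
begin

definition Xi :: "(real \<times> real) set" where
  "Xi = {(x1, x2). x1 \<ge> 0 \<and> x2 \<ge> 0 \<and> x1 + x2 \<le> 1}"

definition xlog3x :: "real \<Rightarrow> real" where
  "xlog3x t = (if t = 0 then 0 else t * ln (3 * t))"

definition bary :: "real \<times> real \<Rightarrow> nat \<Rightarrow> real" where
  "bary x k = (if k = 0 then 1 - fst x - snd x else if k = 1 then fst x else snd x)"

definition vk :: "nat \<Rightarrow> real \<times> real" where
  "vk k = (cos (2 * pi * real k / 3), sin (2 * pi * real k / 3))"

definition Fbeta :: "real \<Rightarrow> real \<times> real \<Rightarrow> real" where
  "Fbeta \<beta> x = - (1/2) * (norm (\<Sum>k<3. bary x k *\<^sub>R vk k))\<^sup>2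
                 + (1 / \<beta>) * (\<Sum>k<3. xlog3x (bary x k))"

definition pcen :: "real \<times> real" where "pcen = (1/3, 1/3)"

end

theory Submission
  imports Defs
begin

text \<open>
  With \<open>y\<^sub>k = x\<^sub>k - 1/3\<close> and \<open>\<Sum> y\<^sub>k = 0\<close>, the quadratic part of \<open>F\<^sub>\<beta>\<close> is \<open>-3/4 \<Sum> y\<^sub>k\<^sup>2\<close>,
  and the linear part of the entropy cancels, so \<open>F\<^sub>\<beta>\<close> is a sum of three copies of
  one function \<open>\<phi>\<^sub>\<beta>\<close> (Fbeta_summand) of a single coordinate. By Taylor's theorem
  \<open>\<phi>\<^sub>\<beta>(t) = (t - 1/3)\<^sup>2 (1/(2\<beta>s) - 3/4)\<close> for some \<open>s\<close> between \<open>t\<close> and \<open>1/3\<close>;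
  the bracket is positive near \<open>1/3\<close> when \<open>\<beta> < 2\<close> and negative when \<open>\<beta> > 2\<close>.
\<close>

lemma sum_lessThan_3: "(\<Sum>k<3. f k) = f 0 + f 1 + f (2::nat)"
  by (simp add: numeral_3_eq_3 numeral_2_eq_2 add.commute add.left_commute)

lemma vk_0: "vk 0 = (1, 0)"
  by (simp add: vk_def)

lemma vk_1: "vk 1 = (-1/2, sqrt 3 / 2)"
  by (simp add: vk_def cos_120 sin_120)

lemma vk_2: "vk 2 = (-1/2, - sqrt 3 / 2)"
proof -
  have "4 * pi / 3 = pi / 3 + pi"
    by simp
  then have "cos (4 * pi / 3) = -1/2" "sin (4 * pi / 3) = - sqrt 3 / 2"
    by (simp_all only: cos_add sin_add) (simp_all add: cos_60 sin_60)
  then show ?thesis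
    by (simp add: vk_def)
qed

lemma norm_sum_vk_squared:
  "(norm (\<Sum>k<3. w k *\<^sub>R vk k))\<^sup>2 = 3/2 * (\<Sum>k<3. (w k)\<^sup>2) - 1/2 * (\<Sum>k<3. w k)\<^sup>2"
proof -
  have norm_Pair_squared: "(norm (a, b))\<^sup>2 = a\<^sup>2 + b\<^sup>2" for a b :: real
    by (simp add: norm_Pair)
  have "(\<Sum>k<3. w k *\<^sub>R vk k) = (w 0 - w 1 / 2 - w 2 / 2, sqrt 3 / 2 * (w 1 - w 2))"
    unfolding sum_lessThan_3 vk_0 vk_1 vk_2 by (simp add: algebra_simps)
  then have "(norm (\<Sum>k<3. w k *\<^sub>R vk k))\<^sup>2 = (w 0 - w 1 / 2 - w 2 / 2)\<^sup>2 + (sqrt 3 / 2 * (w 1 - w 2))\<^sup>2"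
    by (simp only: norm_Pair_squared)
  also have "\<dots> = 3/2 * (\<Sum>k<3. (w k)\<^sup>2) - 1/2 * (\<Sum>k<3. w k)\<^sup>2"
  proof -
    have sqrt3: "(sqrt 3 / 2 * d)\<^sup>2 = 3/4 * d\<^sup>2" for d :: real
      by (simp add: power_mult_distrib power_divide)
    show ?thesis
      unfolding sum_lessThan_3 sqrt3 by (simp add: power2_eq_square algebra_simps)
  qed
  finally show ?thesis .
qed

lemma sum_bary: "(\<Sum>k<3. bary x k) = 1"
  unfolding sum_lessThan_3 by (simp add: bary_def)

lemma Fbeta_eq_entropy_form:
  "Fbeta \<beta> x = 1/4 - 3/4 * (\<Sum>k<3. (bary x k)\<^sup>2) + 1/\<beta> * (\<Sum>k<3. xlog3x (bary x k))"
  by (simp add: Fbeta_def norm_sum_vk_squared sum_bary field_simps)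

definition Fbeta_summand :: "real \<Rightarrow> real \<Rightarrow> real" where
  "Fbeta_summand \<beta> t = 1/\<beta> * (xlog3x t - (t - 1/3)) - 3/4 * (t - 1/3)\<^sup>2"

lemma Fbeta_eq_sum_summand: "Fbeta \<beta> x = (\<Sum>k<3. Fbeta_summand \<beta> (bary x k))"
proof -
  have quadratic: "(\<Sum>k<3. (bary x k)\<^sup>2) = (\<Sum>k<3. (bary x k - 1/3)\<^sup>2) + 1/3"
    using sum_bary[of x] unfolding sum_lessThan_3 by (simp add: power2_eq_square algebra_simps)
  have linear: "(\<Sum>k<3. xlog3x (bary x k)) = (\<Sum>k<3. xlog3x (bary x k) - (bary x k - 1/3))"
    using sum_bary[of x] by (simp add: sum_subtractf)
  show ?thesis
    unfolding Fbeta_eq_entropy_form quadratic linear Fbeta_summand_def sum_lessThan_3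
    by (simp add: diff_divide_distrib add_divide_distrib)
qed

lemma bary_pcen: "k < 3 \<Longrightarrow> bary pcen k = 1/3"
  by (simp add: bary_def pcen_def)

lemma Fbeta_pcen: "Fbeta \<beta> pcen = 0"
  by (simp add: Fbeta_eq_sum_summand bary_pcen Fbeta_summand_def xlog3x_def)

lemma mult_ln_divide_Taylor:
  fixes t c :: real
  assumes "0 < t" "0 < c"
  shows "\<exists>s. min t c \<le> s \<and> s \<le> max t c \<and> t * ln (t / c) = (t - c) + (t - c)\<^sup>2 / (2 * s)"
proof (cases "t = c")
  case False
  define diff :: "nat \<Rightarrow> real \<Rightarrow> real" where
    "diff m = (case m of 0 \<Rightarrow> (\<lambda>u. u * ln (u / c)) | Suc 0 \<Rightarrow> (\<lambda>u. ln (u / c) + 1) | _ \<Rightarrow> inverse)"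
    for m
  have derivs: "\<forall>m u. m < 2 \<and> min t c \<le> u \<and> u \<le> max t c \<longrightarrow> DERIV (diff m) u :> diff (Suc m) u"
  proof (intro allI impI)
    fix m :: nat and u :: real
    assume u: "m < 2 \<and> min t c \<le> u \<and> u \<le> max t c"
    then have "0 < u"
      using assms by linarith
    with u \<open>0 < c\<close> show "DERIV (diff m) u :> diff (Suc m) u"
      by (cases m) (auto simp: diff_def less_Suc_eq inverse_eq_divide intro!: derivative_eq_intros)
  qed
  have "diff 0 = (\<lambda>u. u * ln (u / c))"
    by (simp add: diff_def)
  from Taylor[of 2 diff, OF _ this derivs _ _ _ _ False]
  obtain s where s: "if t < c then t < s \<and> s < c else c < s \<and> s < t"
    and Taylor_eq: "t * ln (t / c) = (\<Sum>m<2. diff m c / fact m * (t - c) ^ m) + diff 2 s / fact 2 * (t - c)\<^sup>2"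
    by auto
  have "t * ln (t / c) = (t - c) + (t - c)\<^sup>2 / (2 * s)"
    using Taylor_eq \<open>0 < c\<close> by (simp add: diff_def numeral_2_eq_2 field_simps)
  then show ?thesis
    using s by (intro exI[of _ s]) (auto split: if_splits)
qed auto

lemma Fbeta_summand_Taylor:
  assumes "0 < t"
  shows "\<exists>s. min t (1/3) \<le> s \<and> s \<le> max t (1/3) \<and>
             Fbeta_summand \<beta> t = (t - 1/3)\<^sup>2 * (1 / (2 * \<beta> * s) - 3/4)"
proof -
  obtain s where s: "min t (1/3) \<le> s" "s \<le> max t (1/3)"
    and Taylor_eq: "t * ln (t / (1/3)) = (t - 1/3) + (t - 1/3)\<^sup>2 / (2 * s)"
    using mult_ln_divide_Taylor[OF assms, of "1/3"] by auto
  have "xlog3x t - (t - 1/3) = (t - 1/3)\<^sup>2 / (2 * s)"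
    using Taylor_eq assms by (simp add: xlog3x_def mult.commute)
  then show ?thesis
    using s by (intro exI[of _ s]) (simp add: Fbeta_summand_def field_simps)
qed

lemma eventually_Fbeta_summand_nonneg:
  assumes "0 < \<beta>" "\<beta> < 2"
  shows "eventually (\<lambda>t. 0 \<le> Fbeta_summand \<beta> t) (nhds (1/3))"
proof -
  have third: "1/3 \<in> {0 <..< 2 / (3 * \<beta>)}"
    using assms by (simp add: field_simps)
  then have "eventually (\<lambda>t. t \<in> {0 <..< 2 / (3 * \<beta>)}) (nhds (1/3))"
    by (intro eventually_nhds_in_open) auto
  then show ?thesis
  proof eventually_elim
    case (elim t)
    then obtain s where s: "min t (1/3) \<le> s" "s \<le> max t (1/3)"
      and eq: "Fbeta_summand \<beta> t = (t - 1/3)\<^sup>2 * (1 / (2 * \<beta> * s) - 3/4)"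
      using Fbeta_summand_Taylor[of t \<beta>] by auto
    have "max t (1/3) < 2 / (3 * \<beta>)"
      using elim third by simp
    then have "0 < s" "s < 2 / (3 * \<beta>)"
      using s elim by auto
    then have "3/4 \<le> 1 / (2 * \<beta> * s)"
      using assms by (simp add: field_simps)
    then show ?case
      by (simp add: eq)
  qed
qed

lemma eventually_Fbeta_summand_nonpos:
  assumes "2 < \<beta>"
  shows "eventually (\<lambda>t. Fbeta_summand \<beta> t \<le> 0) (nhds (1/3))"
proof -
  have third: "1/3 \<in> {2 / (3 * \<beta>) <..}"
    using assms by (simp add: field_simps)
  then have "eventually (\<lambda>t. t \<in> {2 / (3 * \<beta>) <..}) (nhds (1/3))"
    by (intro eventually_nhds_in_open) auto
  then show ?thesis
  proof eventually_elim
    case (elim t)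
    have "0 < t"
      using elim assms by (auto intro: less_trans[rotated])
    then obtain s where s: "min t (1/3) \<le> s"
      and eq: "Fbeta_summand \<beta> t = (t - 1/3)\<^sup>2 * (1 / (2 * \<beta> * s) - 3/4)"
      using Fbeta_summand_Taylor[of t \<beta>] by auto
    have "2 / (3 * \<beta>) < s"
      using s elim third by auto
    then have "1 / (2 * \<beta> * s) \<le> 3/4"
      using assms by (simp add: field_simps)
    then show ?case
      by (simp add: eq mult_nonneg_nonpos)
  qed
qed

lemma tendsto_bary_pcen: "k < 3 \<Longrightarrow> ((\<lambda>x. bary x k) \<longlongrightarrow> 1/3) (nhds pcen)"
  using filterlim_ident[of "nhds pcen"]
  by (auto simp: bary_def pcen_def less_Suc_eq numeral_3_eq_3 intro!: tendsto_eq_intros)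

lemma eventually_bary_pcen:
  assumes "eventually P (nhds (1/3))"
  shows "eventually (\<lambda>x. \<forall>k<3. P (bary x k)) (nhds pcen)"
proof -
  have "eventually (\<lambda>x. \<forall>k\<in>{..<3}. P (bary x k)) (nhds pcen)"
    using eventually_compose_filterlim[OF assms tendsto_bary_pcen]
    by (intro eventually_ball_finite) auto
  then show ?thesis
    by (rule eventually_mono) simp
qed

lemma has_real_derivative_xlog3x:
  assumes "0 < t"
  shows "(xlog3x has_real_derivative ln (3 * t) + 1) (at t)"
proof (rule has_field_derivative_transform_within_open[where S = "{0<..}"])
  show "((\<lambda>u. u * ln (3 * u)) has_real_derivative ln (3 * t) + 1) (at t)"
    using assms by (auto intro!: derivative_eq_intros)
qed (use assms in \<open>auto simp: xlog3x_def\<close>)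

lemma has_real_derivative_Fbeta_summand: "(Fbeta_summand \<beta> has_real_derivative 0) (at (1/3))"
proof -
  have "((\<lambda>t. xlog3x t - (t - 1/3)) has_real_derivative 0) (at (1/3))"
    using has_real_derivative_xlog3x[of "1/3"] by (auto intro!: derivative_eq_intros)
  then have "((\<lambda>t. 1/\<beta> * (xlog3x t - (t - 1/3))) has_real_derivative 1/\<beta> * 0) (at (1/3))"
    by (rule DERIV_cmult)
  moreover have "((\<lambda>t. 3/4 * (t - 1/3)\<^sup>2) has_real_derivative 0) (at (1/3))"
    by (auto intro!: derivative_eq_intros)
  ultimately show ?thesis
    unfolding Fbeta_summand_def[abs_def] using DERIV_diff by fastforce
qed

lemma has_derivative_bary: "((\<lambda>x. bary x k) has_derivative (\<lambda>h. bary h k - bary 0 k)) (at x)"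
  by (auto simp: bary_def intro!: derivative_eq_intros)

lemma has_derivative_Fbeta_pcen: "(Fbeta \<beta> has_derivative (\<lambda>h. 0)) (at pcen)"
proof -
  have "((\<lambda>x. \<Sum>k<3. Fbeta_summand \<beta> (bary x k)) has_derivative (\<lambda>h. \<Sum>k<3. (bary h k - bary 0 k) * 0))
        (at pcen)"
    using has_real_derivative_Fbeta_summand
    by (intro has_derivative_sum DERIV_compose_FDERIV has_derivative_bary) (simp add: bary_pcen)
  then show ?thesis
    by (simp add: Fbeta_eq_sum_summand[abs_def])
qed

theorem lemma4p1:
  shows "(\<forall>\<beta>>0. (Fbeta \<beta> has_derivative (\<lambda>h. 0)) (at pcen))
    \<and> (\<forall>\<beta>. 0 < \<beta> \<and> \<beta> < 2 \<longrightarrow>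
          (\<exists>e>0. \<forall>x\<in>Xi. dist x pcen < e \<longrightarrow> Fbeta \<beta> pcen \<le> Fbeta \<beta> x))
    \<and> (\<forall>\<beta>>2.
          (\<exists>e>0. \<forall>x\<in>Xi. dist x pcen < e \<longrightarrow> Fbeta \<beta> x \<le> Fbeta \<beta> pcen))"
proof (intro conjI allI impI)
  fix \<beta> :: real
  assume "0 < \<beta> \<and> \<beta> < 2"
  then have "eventually (\<lambda>x. \<forall>k<3. 0 \<le> Fbeta_summand \<beta> (bary x k)) (nhds pcen)"
    by (intro eventually_bary_pcen eventually_Fbeta_summand_nonneg) auto
  then have "eventually (\<lambda>x. Fbeta \<beta> pcen \<le> Fbeta \<beta> x) (nhds pcen)"
    unfolding Fbeta_pcen by eventually_elim (auto simp: Fbeta_eq_sum_summand intro!: sum_nonneg)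
  then show "\<exists>e>0. \<forall>x\<in>Xi. dist x pcen < e \<longrightarrow> Fbeta \<beta> pcen \<le> Fbeta \<beta> x"
    unfolding eventually_nhds_metric by blast
next
  fix \<beta> :: real
  assume "2 < \<beta>"
  then have "eventually (\<lambda>x. \<forall>k<3. Fbeta_summand \<beta> (bary x k) \<le> 0) (nhds pcen)"
    by (intro eventually_bary_pcen eventually_Fbeta_summand_nonpos)
  then have "eventually (\<lambda>x. Fbeta \<beta> x \<le> Fbeta \<beta> pcen) (nhds pcen)"
    unfolding Fbeta_pcen by eventually_elim (auto simp: Fbeta_eq_sum_summand intro!: sum_nonpos)
  then show "\<exists>e>0. \<forall>x\<in>Xi. dist x pcen < e \<longrightarrow> Fbeta \<beta> x \<le> Fbeta \<beta> pcen"
    unfolding eventually_nhds_metric by blast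
qed (rule has_derivative_Fbeta_pcen)

end
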